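(* Consider $n$ birds in $\mathbb{R}^d$ evolving noise-free by $x(t)=x(t-1)+v(t)$, $v(t+1)=(P\otimes I_d)v(t)$ ($t\ge1$), where the flocking network is a fixed connected graph $G$ for all $t$ and $P=I_n-CL$ is the corresponding fixed transition matrix. Let $\pi=(\mathrm{tr}\,C^{-1})^{-1}C^{-1}\mathbf{1}$, let $\Gamma=\lim_{t\to\infty}\bigl(-\mathbf{1}\pi^Tt+\sum_{s=0}^{t-1}P^s\bigr)$, let $\mathbf{m}_\pi[x(t)]=(\pi^T\otimes I_d)x(t)$ (the mass center), and let $x^r(t)=x(t)-(\mathbf{1}\otimes I_d)\mathbf{m}_\pi[x(t)]$. Then $x^r(t)$ converges to $x^r=((I_n-\mathbf{1}\pi^T)\otimes I_d)x(0)+(\Gamma\otimes I_d)v(1)$, and the mass center $\mathbf{m}_\pi[x(t)]$ moves in $\mathbb{R}^d$ at constant speed in a fixed direction.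
   Context: $G$ is a connected undirected graph without self-loops on $n$ vertices with degrees $d_i$ and Laplacian $L$; $C=\mathrm{diag}(c_1,\dots,c_n)$ with positive rationals $c_i$ of $O(\log n)$ bits and $c_id_i<1$. $\mathbf{1}$ is the all-ones vector. *)

theory Defs
  imports "HOL-Analysis.Analysis"
begin

text \<open>Graphs on vertex set {0..<n}: symmetric irreflexive edge relation E.
 Matrices are functions nat => nat => real, indexed by {0..<n}.\<close>

definition deg :: "nat \<Rightarrow> (nat \<Rightarrow> nat \<Rightarrow> bool) \<Rightarrow> nat \<Rightarrow> nat" where
  "deg n E i = card {j. j < n \<and> E i j}"

definition laplacian :: "nat \<Rightarrow> (nat \<Rightarrow> nat \<Rightarrow> bool) \<Rightarrow> nat \<Rightarrow> nat \<Rightarrow> real" where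
  "laplacian n E i j = (if i = j then real (deg n E i) else if E i j then -1 else 0)"

definition graph_connected :: "nat \<Rightarrow> (nat \<Rightarrow> nat \<Rightarrow> bool) \<Rightarrow> bool" where
  "graph_connected n E \<longleftrightarrow> n > 0 \<and>
     (\<forall>i<n. \<forall>j<n. (\<lambda>a b. a < n \<and> b < n \<and> E a b)\<^sup>*\<^sup>* i j)"

definition trans_mat :: "nat \<Rightarrow> (nat \<Rightarrow> nat \<Rightarrow> bool) \<Rightarrow> (nat \<Rightarrow> real) \<Rightarrow> nat \<Rightarrow> nat \<Rightarrow> real" where
  "trans_mat n E c i j = (if i = j then 1 else 0) - c i * laplacian n E i j"

definition mat_mult :: "nat \<Rightarrow> (nat \<Rightarrow> nat \<Rightarrow> real) \<Rightarrow> (nat \<Rightarrow> nat \<Rightarrow> real) \<Rightarrow> nat \<Rightarrow> nat \<Rightarrow> real" where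
  "mat_mult n A B i j = (\<Sum>k<n. A i k * B k j)"

fun mat_pow :: "nat \<Rightarrow> (nat \<Rightarrow> nat \<Rightarrow> real) \<Rightarrow> nat \<Rightarrow> nat \<Rightarrow> nat \<Rightarrow> real" where
  "mat_pow n A 0 = (\<lambda>i j. if i = j then 1 else 0)"
| "mat_pow n A (Suc s) = mat_mult n (mat_pow n A s) A"

definition pi_vec :: "nat \<Rightarrow> (nat \<Rightarrow> real) \<Rightarrow> nat \<Rightarrow> real" where
  "pi_vec n c i = (1 / c i) / (\<Sum>j<n. 1 / c j)"

definition Gamma_seq :: "nat \<Rightarrow> (nat \<Rightarrow> nat \<Rightarrow> bool) \<Rightarrow> (nat \<Rightarrow> real) \<Rightarrow> nat \<Rightarrow> nat \<Rightarrow> nat \<Rightarrow> real" where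
  "Gamma_seq n E c t i j = - pi_vec n c j * real t + (\<Sum>s<t. mat_pow n (trans_mat n E c) s i j)"

definition Gamma :: "nat \<Rightarrow> (nat \<Rightarrow> nat \<Rightarrow> bool) \<Rightarrow> (nat \<Rightarrow> real) \<Rightarrow> nat \<Rightarrow> nat \<Rightarrow> real" where
  "Gamma n E c i j = lim (\<lambda>t. Gamma_seq n E c t i j)"

definition mass_center :: "nat \<Rightarrow> (nat \<Rightarrow> real) \<Rightarrow> (nat \<Rightarrow> real ^ 'd) \<Rightarrow> real ^ 'd" where
  "mass_center n c x = (\<Sum>i<n. pi_vec n c i *\<^sub>R x i)"

end

theory Submission
  imports Defs
begin

text \<open>
  Unrolling the recursions gives v(s+1) = (P^s \<otimes> I) v(1). Since \<pi> is a stationary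
  distribution of the row-stochastic matrix P, the \<pi>-mass center of the velocities is
  constant, so the mass center moves with constant velocity (\<pi>^T \<otimes> I) v(1). Subtracting
  it, the relative positions are the initial ones plus (\<Gamma>_t \<otimes> I) v(1), where \<Gamma>_t is the
  t-th partial sum of P^s - 1 \<pi>^T. As G is connected and P has a positive diagonal, some
  power P^K is entrywise at least \<delta> > 0; one application of P^K shrinks the spread of
  every column by the factor 1 - n \<delta>, so P^s - 1 \<pi>^T decays geometrically and \<Gamma>_t
  converges.
\<close>

lemma mat_mult_assoc:
  "mat_mult n (mat_mult n A B) C = mat_mult n A (mat_mult n B C)"
  unfolding mat_mult_def fun_eq_iff
  by (simp add: sum_distrib_left sum_distrib_right mult.assoc, subst sum.swap, simp)

lemma mat_mult_cong:
  "(\<And>k. k < n \<Longrightarrow> A i k = A' i k) \<Longrightarrow> (\<And>k. k < n \<Longrightarrow> B k j = B' k j)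
   \<Longrightarrow> mat_mult n A B i j = mat_mult n A' B' i j"
  unfolding mat_mult_def by (rule sum.cong) auto

lemma mat_pow_add:
  "j < n \<Longrightarrow> mat_pow n A (a + b) i j = mat_mult n (mat_pow n A a) (mat_pow n A b) i j"
proof (induction b arbitrary: j)
  case 0
  then show ?case by (simp add: mat_mult_def if_distrib sum.delta cong: if_cong)
next
  case (Suc b)
  have "mat_pow n A (a + Suc b) i j = mat_mult n (mat_pow n A (a + b)) A i j" by simp
  also have "\<dots> = mat_mult n (mat_mult n (mat_pow n A a) (mat_pow n A b)) A i j"
    by (rule mat_mult_cong) (auto intro: Suc.IH)
  also have "\<dots> = mat_mult n (mat_pow n A a) (mat_pow n A (Suc b)) i j"
    by (simp add: mat_mult_assoc)
  finally show ?case .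
qed

lemma mat_pow_Suc_left:
  assumes "i < n" "j < n"
  shows "mat_pow n A (Suc s) i j = (\<Sum>k<n. A i k * mat_pow n A s k j)"
proof -
  have "mat_pow n A (1 + s) i j = mat_mult n (mat_pow n A 1) (mat_pow n A s) i j"
    by (rule mat_pow_add[OF assms(2)])
  also have "\<dots> = mat_mult n A (mat_pow n A s) i j"
    using assms(1)
    by (intro mat_mult_cong) (simp_all add: mat_mult_def if_distrib[of "\<lambda>y. y * _"] sum.delta' cong: if_cong)
  finally show ?thesis by (simp add: mat_mult_def)
qed

lemma stationary_mat_pow:
  assumes stationary: "\<And>j. j < n \<Longrightarrow> (\<Sum>i<n. p i * A i j) = p j" and "j < n"
  shows "(\<Sum>i<n. p i * mat_pow n A s i j) = p j"
  using \<open>j < n\<close>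
proof (induction s arbitrary: j)
  case 0
  then show ?case by (simp add: sum.delta if_distrib cong: if_cong)
next
  case (Suc s)
  have "(\<Sum>i<n. p i * mat_pow n A (Suc s) i j) = (\<Sum>k<n. (\<Sum>i<n. p i * mat_pow n A s i k) * A k j)"
    by (simp add: mat_mult_def sum_distrib_left sum_distrib_right mult.assoc) (subst sum.swap, simp)
  also have "\<dots> = (\<Sum>k<n. p k * A k j)"
    using Suc.IH by (intro sum.cong) auto
  finally show ?case using stationary Suc.prems by simp
qed

lemma convex_combination_bounds:
  fixes p u :: "nat \<Rightarrow> real"
  assumes "\<And>k. k < n \<Longrightarrow> 0 \<le> p k" "(\<Sum>k<n. p k) = 1"
    and "\<And>k. k < n \<Longrightarrow> a \<le> u k \<and> u k \<le> b"
  shows "a \<le> (\<Sum>k<n. p k * u k)" "(\<Sum>k<n. p k * u k) \<le> b"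
proof -
  have "(\<Sum>k<n. p k * a) \<le> (\<Sum>k<n. p k * u k)" "(\<Sum>k<n. p k * u k) \<le> (\<Sum>k<n. p k * b)"
    using assms by (auto intro!: sum_mono mult_left_mono)
  then show "a \<le> (\<Sum>k<n. p k * u k)" "(\<Sum>k<n. p k * u k) \<le> b"
    using assms(2) by (simp_all add: sum_distrib_right[symmetric])
qed

text \<open>Splitting off the uniform part \<delta> of the weights: the rest has mass 1 - n\<delta>.\<close>

lemma weighted_sum_contracts:
  fixes A u :: "nat \<Rightarrow> real"
  assumes "\<And>k. k < n \<Longrightarrow> \<delta> \<le> A k" "(\<Sum>k<n. A k) = 1"
    and "\<And>k. k < n \<Longrightarrow> a \<le> u k \<and> u k \<le> b"
  shows "(1 - real n * \<delta>) * a + \<delta> * (\<Sum>k<n. u k) \<le> (\<Sum>k<n. A k * u k)"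
    "(\<Sum>k<n. A k * u k) \<le> (1 - real n * \<delta>) * b + \<delta> * (\<Sum>k<n. u k)"
proof -
  have split: "(\<Sum>k<n. A k * u k) = (\<Sum>k<n. (A k - \<delta>) * u k) + \<delta> * (\<Sum>k<n. u k)"
    by (simp add: algebra_simps sum.distrib sum_subtractf sum_distrib_left)
  have mass: "(\<Sum>k<n. A k - \<delta>) = 1 - real n * \<delta>"
    using assms(2) by (simp add: sum_subtractf)
  have "(\<Sum>k<n. (A k - \<delta>) * a) \<le> (\<Sum>k<n. (A k - \<delta>) * u k)"
    "(\<Sum>k<n. (A k - \<delta>) * u k) \<le> (\<Sum>k<n. (A k - \<delta>) * b)"
    using assms by (auto intro!: sum_mono mult_left_mono)
  then show "(1 - real n * \<delta>) * a + \<delta> * (\<Sum>k<n. u k) \<le> (\<Sum>k<n. A k * u k)"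
    "(\<Sum>k<n. A k * u k) \<le> (1 - real n * \<delta>) * b + \<delta> * (\<Sum>k<n. u k)"
    using split mass by (simp_all add: sum_distrib_right[symmetric])
qed

lemma summable_power_div:
  fixes \<rho> :: real
  assumes "0 < \<rho>" "\<rho> < 1" "K > 0"
  shows "summable (\<lambda>s. \<rho> ^ (s div K))"
proof -
  define r where "r = root K \<rho>"
  have r0: "0 < r" and r1: "r < 1" using assms by (auto simp: r_def real_root_gt_zero)
  have rK: "r ^ K = \<rho>" using assms by (simp add: r_def)
  have bound: "norm (\<rho> ^ (s div K)) \<le> (1 / \<rho>) * r ^ s" for s
  proof -
    have "s \<le> K * (s div K) + K"
      using mult_div_mod_eq[of K s] mod_less_divisor[OF assms(3), of s] by linarith
    then have "r ^ (K * (s div K) + K) \<le> r ^ s"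
      using r0 r1 by (intro power_decreasing) auto
    moreover have "r ^ (K * (s div K) + K) = \<rho> ^ (s div K) * \<rho>"
      by (simp add: power_add power_mult rK mult.commute)
    ultimately show ?thesis using assms by (simp add: field_simps)
  qed
  have "summable (\<lambda>s. (1 / \<rho>) * r ^ s)"
    using r0 r1 by (intro summable_mult summable_geometric) auto
  then show ?thesis
    by (rule summable_comparison_test'[where N=0]) (use bound in auto)
qed

locale stochastic_matrix =
  fixes n :: nat and A :: "nat \<Rightarrow> nat \<Rightarrow> real"
  assumes nonneg: "i < n \<Longrightarrow> j < n \<Longrightarrow> 0 \<le> A i j"
    and row_sum: "i < n \<Longrightarrow> (\<Sum>j<n. A i j) = 1"
begin

lemma entry_le_one: "i < n \<Longrightarrow> j < n \<Longrightarrow> A i j \<le> 1"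
  using member_le_sum[of j "{..<n}" "A i"] nonneg row_sum by auto

lemma stochastic_mat_pow: "stochastic_matrix n (mat_pow n A s)"
proof (induction s)
  case 0
  show ?case by unfold_locales (simp_all add: sum.delta)
next
  case (Suc s)
  then interpret P: stochastic_matrix n "mat_pow n A s" .
  show ?case
  proof unfold_locales
    show "0 \<le> mat_pow n A (Suc s) i j" if "i < n" "j < n" for i j
      using that by (auto simp: mat_mult_def intro!: sum_nonneg mult_nonneg_nonneg P.nonneg nonneg)
    show "(\<Sum>j<n. mat_pow n A (Suc s) i j) = 1" if "i < n" for i
    proof -
      have "(\<Sum>j<n. mat_pow n A (Suc s) i j) = (\<Sum>k<n. mat_pow n A s i k * (\<Sum>j<n. A k j))"
        by (simp add: mat_mult_def sum_distrib_left) (subst sum.swap, simp)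
      also have "\<dots> = 1" using that by (simp add: row_sum P.row_sum)
      finally show ?thesis .
    qed
  qed
qed

lemma mat_pow_Suc_pos:
  assumes "i < n" "k < n" "l < n" "0 < mat_pow n A m i k" "0 < A k l"
  shows "0 < mat_pow n A (Suc m) i l"
proof -
  interpret P: stochastic_matrix n "mat_pow n A m" by (rule stochastic_mat_pow)
  have "mat_pow n A m i k * A k l \<le> mat_pow n A (Suc m) i l"
    unfolding mat_pow.simps mat_mult_def using assms
    by (intro member_le_sum[where f = "\<lambda>q. mat_pow n A m i q * A q l"])
       (auto intro!: mult_nonneg_nonneg P.nonneg nonneg)
  then show ?thesis using mult_pos_pos[OF assms(4,5)] by linarith
qed

context
  assumes diag_pos: "\<And>i. i < n \<Longrightarrow> 0 < A i i"
begin

lemma mat_pow_diag_pos: "i < n \<Longrightarrow> 0 < mat_pow n A m i i"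
proof (induction m)
  case (Suc m)
  then show ?case using mat_pow_Suc_pos diag_pos by blast
qed simp

text \<open>The positive diagonal keeps an entry positive once it has become positive.\<close>

lemma mat_pow_pos_eventually:
  assumes "(\<lambda>a b. a < n \<and> b < n \<and> 0 < A a b)\<^sup>*\<^sup>* i j" "i < n"
  shows "\<forall>\<^sub>F m in sequentially. 0 < mat_pow n A m i j"
  using assms(1)
proof (induction rule: rtranclp_induct)
  case base
  then show ?case using mat_pow_diag_pos assms(2) by simp
next
  case (step j k)
  then have "\<forall>\<^sub>F m in sequentially. 0 < mat_pow n A (Suc m) i k"
    by (elim eventually_mono) (use mat_pow_Suc_pos[OF assms(2)] in blast)
  then show ?case
    using eventually_sequentially_Suc[of "\<lambda>m. 0 < mat_pow n A m i k"] by blast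
qed

lemma mat_pow_uniformly_pos:
  assumes "n > 0" and irreducible: "\<And>i j. i < n \<Longrightarrow> j < n \<Longrightarrow> (\<lambda>a b. a < n \<and> b < n \<and> 0 < A a b)\<^sup>*\<^sup>* i j"
  obtains K \<delta> where "K > 0" "\<delta> > 0" "\<And>i j. i < n \<Longrightarrow> j < n \<Longrightarrow> \<delta> \<le> mat_pow n A K i j"
proof -
  let ?pairs = "{..<n} \<times> {..<n}"
  have "\<forall>\<^sub>F m in sequentially. \<forall>(i, j)\<in>?pairs. 0 < mat_pow n A m i j"
    using irreducible by (auto intro!: eventually_ball_finite mat_pow_pos_eventually)
  then obtain N where "\<forall>m\<ge>N. \<forall>(i, j)\<in>?pairs. 0 < mat_pow n A m i j"
    by (auto simp: eventually_sequentially)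
  then have pos: "\<forall>(i, j)\<in>?pairs. 0 < mat_pow n A (Suc N) i j" by (simp del: mat_pow.simps)
  define \<delta> where "\<delta> = Min ((\<lambda>(i, j). mat_pow n A (Suc N) i j) ` ?pairs)"
  have "\<delta> > 0" unfolding \<delta>_def using pos \<open>n > 0\<close> by (subst Min_gr_iff) auto
  moreover have "\<delta> \<le> mat_pow n A (Suc N) i j" if "i < n" "j < n" for i j
    unfolding \<delta>_def using that by (intro Min_le) auto
  ultimately show ?thesis using that[of "Suc N"] by blast
qed

end

context
  fixes p :: "nat \<Rightarrow> real"
  assumes p_nonneg: "\<And>i. i < n \<Longrightarrow> 0 \<le> p i"
    and p_sum: "(\<Sum>i<n. p i) = 1"
    and p_stationary: "\<And>j. j < n \<Longrightarrow> (\<Sum>i<n. p i * A i j) = p j"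
begin

context
  fixes K :: nat and \<delta> :: real
  assumes K_pos: "K > 0" and \<delta>_pos: "\<delta> > 0"
    and pow_K_ge: "\<And>i j. i < n \<Longrightarrow> j < n \<Longrightarrow> \<delta> \<le> mat_pow n A K i j"
begin

text \<open>The maximum with 1/2 keeps the rate positive in the extreme case n \<delta> = 1.\<close>

definition contraction_rate :: real where
  "contraction_rate = max (1 - real n * \<delta>) (1 / 2)"

lemma contraction_rate_bounds: "0 < contraction_rate" "contraction_rate < 1"
proof -
  have "n > 0" using p_sum by (cases n) auto
  then show "0 < contraction_rate" "contraction_rate < 1"
    using \<delta>_pos by (auto simp: contraction_rate_def)
qed

lemma column_spread_decays:
  assumes "j < n"
  shows "\<exists>a b. (\<forall>k<n. a \<le> mat_pow n A s k j \<and> mat_pow n A s k j \<le> b)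
               \<and> b - a \<le> contraction_rate ^ (s div K)"
proof (induction s rule: less_induct)
  case (less s)
  show ?case
  proof (cases "s < K")
    case True
    interpret P: stochastic_matrix n "mat_pow n A s" by (rule stochastic_mat_pow)
    show ?thesis
      using True assms P.nonneg P.entry_le_one by (intro exI[of _ 0] exI[of _ 1]) simp
  next
    case False
    define m where "m = s - K"
    have s: "s = K + m" using False by (simp add: m_def)
    then obtain a b where ab: "\<forall>k<n. a \<le> mat_pow n A m k j \<and> mat_pow n A m k j \<le> b"
      and spread: "b - a \<le> contraction_rate ^ (m div K)"
      using less.IH K_pos by (metis less_add_same_cancel2)
    interpret PK: stochastic_matrix n "mat_pow n A K" by (rule stochastic_mat_pow)
    define S where "S = (\<Sum>l<n. mat_pow n A m l j)"
    have step: "mat_pow n A s k j = (\<Sum>l<n. mat_pow n A K k l * mat_pow n A m l j)" for k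
      using assms by (simp add: s mat_pow_add mat_mult_def)
    have lo: "(1 - real n * \<delta>) * a + \<delta> * S \<le> mat_pow n A s k j"
      and hi: "mat_pow n A s k j \<le> (1 - real n * \<delta>) * b + \<delta> * S" if "k < n" for k
      using weighted_sum_contracts[of n \<delta> "mat_pow n A K k" a "\<lambda>l. mat_pow n A m l j" b]
        pow_K_ge that PK.row_sum ab
      unfolding step S_def by auto
    have "0 \<le> b - a" using ab \<open>j < n\<close> by force
    then have "(1 - real n * \<delta>) * (b - a) \<le> contraction_rate * contraction_rate ^ (m div K)"
      using spread contraction_rate_bounds
      by (intro mult_mono) (auto simp: contraction_rate_def)
    also have "\<dots> = contraction_rate ^ (s div K)"
      using K_pos by (simp add: s div_add_self1)
    finally have "((1 - real n * \<delta>) * b + \<delta> * S) - ((1 - real n * \<delta>) * a + \<delta> * S)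
        \<le> contraction_rate ^ (s div K)"
      by (simp add: algebra_simps)
    then show ?thesis using lo hi by blast
  qed
qed

lemma mat_pow_minus_stationary_bound:
  assumes "i < n" "j < n"
  shows "\<bar>mat_pow n A s i j - p j\<bar> \<le> contraction_rate ^ (s div K)"
proof -
  obtain a b where ab: "\<forall>k<n. a \<le> mat_pow n A s k j \<and> mat_pow n A s k j \<le> b"
    and spread: "b - a \<le> contraction_rate ^ (s div K)"
    using column_spread_decays[OF assms(2)] by blast
  have "a \<le> p j" "p j \<le> b"
    using convex_combination_bounds[of n p a "\<lambda>k. mat_pow n A s k j" b] p_nonneg p_sum ab
      stationary_mat_pow[OF p_stationary assms(2)] by auto
  then show ?thesis using ab assms spread by auto
qed

lemma summable_mat_pow_minus_stationary:
  assumes "i < n" "j < n"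
  shows "summable (\<lambda>s. mat_pow n A s i j - p j)"
  using summable_power_div[OF contraction_rate_bounds K_pos]
  by (rule summable_comparison_test'[where N = 0])
     (simp add: mat_pow_minus_stationary_bound[OF assms])

end

end

end

context
  fixes n :: nat and E :: "nat \<Rightarrow> nat \<Rightarrow> bool"
  assumes irrefl: "\<And>i. \<not> E i i" and sym: "\<And>i j. E i j \<Longrightarrow> E j i"
begin

lemma laplacian_row_sum: "i < n \<Longrightarrow> (\<Sum>j<n. laplacian n E i j) = 0"
proof -
  assume i: "i < n"
  have "(\<Sum>j<n. laplacian n E i j)
      = (\<Sum>j<n. (if i = j then real (deg n E i) else 0) - (if E i j then 1 else 0))"
    by (rule sum.cong) (auto simp: laplacian_def irrefl)
  also have "\<dots> = real (deg n E i) - real (card {j \<in> {..<n}. E i j})"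
    using i by (simp add: sum_subtractf sum.delta sum.inter_filter[symmetric])
  also have "\<dots> = 0" by (simp add: deg_def conj_commute)
  finally show ?thesis .
qed

lemma laplacian_column_sum: "j < n \<Longrightarrow> (\<Sum>i<n. laplacian n E i j) = 0"
proof -
  have "laplacian n E i j = laplacian n E j i" for i
    using sym by (auto simp: laplacian_def)
  then show "j < n \<Longrightarrow> ?thesis" using laplacian_row_sum[of j] by simp
qed

context
  fixes c :: "nat \<Rightarrow> real"
  assumes c_pos: "\<And>i. i < n \<Longrightarrow> c i > 0"
    and c_deg: "\<And>i. i < n \<Longrightarrow> c i * real (deg n E i) < 1"
begin

lemma stochastic_trans_mat: "stochastic_matrix n (trans_mat n E c)"
proof
  show "0 \<le> trans_mat n E c i j" if "i < n" "j < n" for i j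
    using that c_pos[of i] c_deg[of i] by (auto simp: trans_mat_def laplacian_def)
  show "(\<Sum>j<n. trans_mat n E c i j) = 1" if "i < n" for i
    using that by (simp add: trans_mat_def sum_subtractf sum_distrib_left[symmetric] laplacian_row_sum)
qed

lemma trans_mat_diag_pos: "i < n \<Longrightarrow> 0 < trans_mat n E c i i"
  using c_deg[of i] by (auto simp: trans_mat_def laplacian_def)

lemma trans_mat_edge_pos: "i < n \<Longrightarrow> E i j \<Longrightarrow> 0 < trans_mat n E c i j"
  using c_pos[of i] irrefl[of i] by (auto simp: trans_mat_def laplacian_def)

lemma sum_inverse_pos: "n > 0 \<Longrightarrow> 0 < (\<Sum>j<n. 1 / c j)"
  using c_pos by (intro sum_pos) auto

lemma pi_vec_pos: "i < n \<Longrightarrow> 0 < pi_vec n c i"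
  using c_pos[of i] sum_inverse_pos by (simp add: pi_vec_def)

lemma pi_vec_sum: "n > 0 \<Longrightarrow> (\<Sum>i<n. pi_vec n c i) = 1"
  using sum_inverse_pos unfolding pi_vec_def sum_divide_distrib[symmetric] by simp

text \<open>Since \<pi> is proportional to C^-1 1, \<pi>^T P = \<pi>^T - 1^T L / tr C^-1, and L has zero column sums.\<close>

lemma pi_vec_stationary:
  assumes "j < n"
  shows "(\<Sum>i<n. pi_vec n c i * trans_mat n E c i j) = pi_vec n c j"
proof -
  define T where "T = (\<Sum>j<n. 1 / c j)"
  have T: "T > 0" unfolding T_def using assms by (intro sum_inverse_pos) simp
  have "pi_vec n c i * trans_mat n E c i j = (if i = j then pi_vec n c j else 0) - laplacian n E i j / T"
    if "i < n" for i
    using c_pos[OF that] T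
    by (cases "i = j") (simp_all add: pi_vec_def trans_mat_def T_def[symmetric] field_simps)
  then have "(\<Sum>i<n. pi_vec n c i * trans_mat n E c i j)
      = (\<Sum>i<n. (if i = j then pi_vec n c j else 0) - laplacian n E i j / T)"
    by (intro sum.cong) auto
  also have "\<dots> = pi_vec n c j"
    using assms by (simp add: sum_subtractf sum_divide_distrib[symmetric] laplacian_column_sum)
  finally show ?thesis .
qed

lemma Gamma_seq_tendsto_Gamma:
  assumes conn: "graph_connected n E" and "i < n" "j < n"
  shows "(\<lambda>t. Gamma_seq n E c t i j) \<longlonglongrightarrow> Gamma n E c i j"
proof -
  interpret P: stochastic_matrix n "trans_mat n E c" by (rule stochastic_trans_mat)
  have n: "n > 0" using conn by (simp add: graph_connected_def)
  have "(\<lambda>a b. a < n \<and> b < n \<and> 0 < trans_mat n E c a b)\<^sup>*\<^sup>* i' j'" if "i' < n" "j' < n" for i' j'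
  proof -
    have "(\<lambda>a b. a < n \<and> b < n \<and> E a b)\<^sup>*\<^sup>* i' j'"
      using conn that unfolding graph_connected_def by blast
    then show ?thesis
      by (rule mono_rtranclp[rule_format, rotated]) (auto intro: trans_mat_edge_pos)
  qed
  then obtain K \<delta> where K: "K > 0" "\<delta> > 0"
    "\<And>i j. i < n \<Longrightarrow> j < n \<Longrightarrow> \<delta> \<le> mat_pow n (trans_mat n E c) K i j"
    using P.mat_pow_uniformly_pos[OF trans_mat_diag_pos n] by blast
  have "summable (\<lambda>s. mat_pow n (trans_mat n E c) s i j - pi_vec n c j)"
    using P.summable_mat_pow_minus_stationary[OF _ pi_vec_sum pi_vec_stationary K assms(2,3)]
      pi_vec_pos n by (simp add: less_imp_le)
  then have "(\<lambda>t. \<Sum>s<t. mat_pow n (trans_mat n E c) s i j - pi_vec n c j)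
      \<longlonglongrightarrow> (\<Sum>s. mat_pow n (trans_mat n E c) s i j - pi_vec n c j)"
    by (rule summable_LIMSEQ)
  then have "(\<lambda>t. Gamma_seq n E c t i j) \<longlonglongrightarrow> (\<Sum>s. mat_pow n (trans_mat n E c) s i j - pi_vec n c j)"
    by (simp add: Gamma_seq_def sum_subtractf mult.commute)
  then show ?thesis
    unfolding Gamma_def by (simp add: limI)
qed

end

end

context
  fixes n :: nat and A :: "nat \<Rightarrow> nat \<Rightarrow> real" and p :: "nat \<Rightarrow> real"
    and x v :: "nat \<Rightarrow> nat \<Rightarrow> 'a :: real_vector"
  assumes p_stationary: "\<And>j. j < n \<Longrightarrow> (\<Sum>i<n. p i * A i j) = p j"
    and pos_step: "\<And>t i. t \<ge> 1 \<Longrightarrow> i < n \<Longrightarrow> x t i = x (t - 1) i + v t i"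
    and vel_step: "\<And>t i. t \<ge> 1 \<Longrightarrow> i < n \<Longrightarrow> v (t + 1) i = (\<Sum>j<n. A i j *\<^sub>R v t j)"
begin

lemma velocity_closed_form: "i < n \<Longrightarrow> v (Suc s) i = (\<Sum>j<n. mat_pow n A s i j *\<^sub>R v 1 j)"
proof (induction s arbitrary: i)
  case 0
  have "(\<Sum>j<n. mat_pow n A 0 i j *\<^sub>R v 1 j) = (\<Sum>j<n. if i = j then v 1 j else 0)"
    by (rule sum.cong) auto
  then show ?case using 0 by simp
next
  case (Suc s)
  have "v (Suc (Suc s)) i = (\<Sum>k<n. A i k *\<^sub>R (\<Sum>j<n. mat_pow n A s k j *\<^sub>R v 1 j))"
    using vel_step[of "Suc s" i] Suc by simp
  also have "\<dots> = (\<Sum>j<n. (\<Sum>k<n. A i k * mat_pow n A s k j) *\<^sub>R v 1 j)"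
    by (simp add: scaleR_sum_right scaleR_sum_left) (subst sum.swap, simp)
  also have "\<dots> = (\<Sum>j<n. mat_pow n A (Suc s) i j *\<^sub>R v 1 j)"
    using Suc.prems by (intro sum.cong) (simp_all add: mat_pow_Suc_left del: mat_pow.simps)
  finally show ?case .
qed

lemma position_closed_form:
  assumes "i < n"
  shows "x t i = x 0 i + (\<Sum>s<t. \<Sum>j<n. mat_pow n A s i j *\<^sub>R v 1 j)"
proof (induction t)
  case (Suc t)
  then show ?case using pos_step[of "Suc t" i] velocity_closed_form[OF assms, of t] assms by simp
qed simp

lemma weighted_velocity_constant:
  "(\<Sum>i<n. p i *\<^sub>R v (Suc s) i) = (\<Sum>j<n. p j *\<^sub>R v 1 j)"
proof -
  have "(\<Sum>i<n. p i *\<^sub>R v (Suc s) i) = (\<Sum>i<n. p i *\<^sub>R (\<Sum>j<n. mat_pow n A s i j *\<^sub>R v 1 j))"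
    by (intro sum.cong) (simp_all add: velocity_closed_form)
  also have "\<dots> = (\<Sum>j<n. (\<Sum>i<n. p i * mat_pow n A s i j) *\<^sub>R v 1 j)"
    by (simp add: scaleR_sum_right scaleR_sum_left) (subst sum.swap, simp)
  also have "\<dots> = (\<Sum>j<n. p j *\<^sub>R v 1 j)"
    by (intro sum.cong) (simp_all add: stationary_mat_pow[OF p_stationary])
  finally show ?thesis .
qed

lemma weighted_center_drift:
  "(\<Sum>i<n. p i *\<^sub>R x t i) = (\<Sum>i<n. p i *\<^sub>R x 0 i) + real t *\<^sub>R (\<Sum>j<n. p j *\<^sub>R v 1 j)"
proof (induction t)
  case (Suc t)
  have "(\<Sum>i<n. p i *\<^sub>R x (Suc t) i) = (\<Sum>i<n. p i *\<^sub>R x t i) + (\<Sum>i<n. p i *\<^sub>R v (Suc t) i)"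
    by (simp add: pos_step[of "Suc t"] scaleR_add_right sum.distrib)
  then show ?case by (simp add: Suc weighted_velocity_constant[of t] algebra_simps)
qed simp

lemma relative_position_closed_form:
  assumes "i < n"
  shows "x t i - (\<Sum>k<n. p k *\<^sub>R x t k) = x 0 i - (\<Sum>k<n. p k *\<^sub>R x 0 k)
           + (\<Sum>j<n. (- p j * real t + (\<Sum>s<t. mat_pow n A s i j)) *\<^sub>R v 1 j)"
proof -
  have "(\<Sum>j<n. (- p j * real t + (\<Sum>s<t. mat_pow n A s i j)) *\<^sub>R v 1 j)
      = (\<Sum>j<n. - real t *\<^sub>R (p j *\<^sub>R v 1 j)) + (\<Sum>j<n. \<Sum>s<t. mat_pow n A s i j *\<^sub>R v 1 j)"
    unfolding sum.distrib[symmetric] by (intro sum.cong) (simp_all add: scaleR_diff_left scaleR_sum_left mult.commute)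
  also have "\<dots> = (\<Sum>s<t. \<Sum>j<n. mat_pow n A s i j *\<^sub>R v 1 j) - real t *\<^sub>R (\<Sum>j<n. p j *\<^sub>R v 1 j)"
    by (simp add: scaleR_sum_right sum_negf sum.swap[of _ "{..<n}" "{..<t}"])
  finally have "(\<Sum>j<n. (- p j * real t + (\<Sum>s<t. mat_pow n A s i j)) *\<^sub>R v 1 j)
      = (\<Sum>s<t. \<Sum>j<n. mat_pow n A s i j *\<^sub>R v 1 j) - real t *\<^sub>R (\<Sum>j<n. p j *\<^sub>R v 1 j)" .
  then show ?thesis
    using position_closed_form[OF assms, of t] weighted_center_drift[of t] by (simp add: algebra_simps)
qed

end

theorem lemma3p11:
  fixes n :: nat and E :: "nat \<Rightarrow> nat \<Rightarrow> bool" and c :: "nat \<Rightarrow> real"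
    and x v :: "nat \<Rightarrow> nat \<Rightarrow> real ^ 'd"
  assumes irrefl: "\<And>i. \<not> E i i"
    and sym: "\<And>i j. E i j \<Longrightarrow> E j i"
    and conn: "graph_connected n E"
    and c_rat: "\<And>i. i < n \<Longrightarrow> c i \<in> \<rat>"
    and c_pos: "\<And>i. i < n \<Longrightarrow> c i > 0"
    and c_deg: "\<And>i. i < n \<Longrightarrow> c i * real (deg n E i) < 1"
    and pos_step: "\<And>t i. t \<ge> 1 \<Longrightarrow> i < n \<Longrightarrow> x t i = x (t - 1) i + v t i"
    and vel_step: "\<And>t i. t \<ge> 1 \<Longrightarrow> i < n \<Longrightarrow>
                     v (t + 1) i = (\<Sum>j<n. trans_mat n E c i j *\<^sub>R v t j)"
  shows "(\<forall>i<n. \<forall>j<n. (\<lambda>t. Gamma_seq n E c t i j) \<longlonglongrightarrow> Gamma n E c i j)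
       \<and> (\<forall>i<n. (\<lambda>t. x t i - mass_center n c (x t))
              \<longlonglongrightarrow> (x 0 i - mass_center n c (x 0)
                   + (\<Sum>j<n. Gamma n E c i j *\<^sub>R v 1 j)))
       \<and> (\<exists>w :: real ^ 'd. \<forall>t. mass_center n c (x t) = mass_center n c (x 0) + real t *\<^sub>R w)"
proof -
  \<comment> \<open>The rationality of the c i only matters for the bit complexity in the paper.\<close>
  note dynamics = pi_vec_stationary[OF irrefl sym c_pos c_deg] pos_step vel_step
  have Gamma: "(\<lambda>t. Gamma_seq n E c t i j) \<longlonglongrightarrow> Gamma n E c i j" if "i < n" "j < n" for i j
    by (rule Gamma_seq_tendsto_Gamma[OF irrefl sym c_pos c_deg conn that])
  have "(\<lambda>t. x t i - mass_center n c (x t))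
          \<longlonglongrightarrow> x 0 i - mass_center n c (x 0) + (\<Sum>j<n. Gamma n E c i j *\<^sub>R v 1 j)" if "i < n" for i
  proof -
    have relative: "(\<lambda>t. x t i - mass_center n c (x t))
        = (\<lambda>t. x 0 i - mass_center n c (x 0) + (\<Sum>j<n. Gamma_seq n E c t i j *\<^sub>R v 1 j))"
      unfolding mass_center_def Gamma_seq_def by (rule ext relative_position_closed_form[OF dynamics that])+
    have "(\<lambda>t. \<Sum>j<n. Gamma_seq n E c t i j *\<^sub>R v 1 j) \<longlonglongrightarrow> (\<Sum>j<n. Gamma n E c i j *\<^sub>R v 1 j)"
      using Gamma that by (intro tendsto_sum tendsto_scaleR tendsto_const) auto
    then show ?thesis unfolding relative by (rule tendsto_add[OF tendsto_const])
  qed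
  moreover have "mass_center n c (x t)
      = mass_center n c (x 0) + real t *\<^sub>R (\<Sum>j<n. pi_vec n c j *\<^sub>R v 1 j)" for t
    unfolding mass_center_def by (rule weighted_center_drift[OF dynamics])
  ultimately show ?thesis using Gamma by blast
qed

end
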